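(* Let $V$ be an oriented $4$-dimensional real inner product space with an oriented orthonormal basis $f^1,f^2,f^3,f^4$ of $V^*$ and $2$-forms $\omega_1=f^1\wedge f^2+f^3\wedge f^4$, $\omega_2=f^1\wedge f^3+f^4\wedge f^2$, $\omega_3=f^1\wedge f^4+f^2\wedge f^3$, and let $e_1,e_2,e_3$ be the standard basis of $\mathbb{R}^3$. Consider the linear maps $A:V^*\otimes\Lambda^3V^*\to\Lambda^4V^*$, $A(\gamma\otimes\eta)=\gamma\wedge\eta$, and $B:S^2V^*\otimes\mathbb{R}^3\to V^*\otimes\Lambda^3V^*$, $$B:\ h^k_{pq}f^pf^q\otimes e_k\longmapsto h^k_{pq}\big[f^p\otimes(f^q\wedge\omega_k)+f^q\otimes(f^p\wedge\omega_k)\big]$$ (summation over repeated indices, $h^k_{pq}=h^k_{qp}$). Then the map $B$ surjects onto the kernel of $A$.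
   Context: $S^2V^*$ is the symmetric square of $V^*$, with $f^pf^q$ the symmetric product. $\omega_1,\omega_2,\omega_3$ are the standard hyperkähler (self-dual) $2$-forms on $V$. *)

theory Defs
  imports Complex_Main
begin

text \<open>Coordinate model of the exterior algebra of V* with respect to the oriented
orthonormal basis f^1..f^4 (indexed 0..3 here). A form is given by its coefficients
on index sets: alpha S is the coefficient of f^{i1} wedge ... wedge f^{ik}, where
S = {i1 < ... < ik}.\<close>

type_synonym form = "nat set \<Rightarrow> real"

definition shuffle_sign :: "nat set \<Rightarrow> nat set \<Rightarrow> real" where
  "shuffle_sign I J = (-1) ^ card {(i, j). i \<in> I \<and> j \<in> J \<and> j < i}"

definition wedge :: "form \<Rightarrow> form \<Rightarrow> form" where
  "wedge \<alpha> \<beta> S = (\<Sum>I\<in>Pow S. shuffle_sign I (S - I) * \<alpha> I * \<beta> (S - I))"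

definition form_add :: "form \<Rightarrow> form \<Rightarrow> form" where
  "form_add \<alpha> \<beta> = (\<lambda>S. \<alpha> S + \<beta> S)"

definition is_form :: "nat \<Rightarrow> form \<Rightarrow> bool" where
  "is_form k \<alpha> \<longleftrightarrow> (\<forall>S. \<alpha> S \<noteq> 0 \<longrightarrow> S \<subseteq> {0..<4} \<and> card S = k)"

definition fb :: "nat \<Rightarrow> form" where
  "fb i = (\<lambda>S. if S = {i} then 1 else 0)"

definition omega :: "nat \<Rightarrow> form" where
  "omega k = (if k = 0 then form_add (wedge (fb 0) (fb 1)) (wedge (fb 2) (fb 3))
              else if k = 1 then form_add (wedge (fb 0) (fb 2)) (wedge (fb 3) (fb 1))
              else form_add (wedge (fb 0) (fb 3)) (wedge (fb 1) (fb 2)))"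

text \<open>An element of V* tensor Lambda^3 V* is written uniquely as
  sum_i f^(i+1) tensor T i, with T i a 3-form; we represent it by T.\<close>
type_synonym tensor13 = "nat \<Rightarrow> form"

definition valid_T :: "tensor13 \<Rightarrow> bool" where
  "valid_T T \<longleftrightarrow> (\<forall>i. (i \<ge> 4 \<longrightarrow> T i = (\<lambda>_. 0)) \<and> is_form 3 (T i))"

definition mapA :: "tensor13 \<Rightarrow> form" where
  "mapA T = (\<lambda>S. \<Sum>i<4. wedge (fb i) (T i) S)"

text \<open>An element of S^2 V* tensor R^3 is sum h^k_pq f^p f^q tensor e_k with
  h^k_pq = h^k_qp; represented by h k p q (k<3, p,q<4), symmetric in p q.\<close>
definition valid_h :: "(nat \<Rightarrow> nat \<Rightarrow> nat \<Rightarrow> real) \<Rightarrow> bool" where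
  "valid_h h \<longleftrightarrow> (\<forall>k p q. h k p q = h k q p \<and>
      (\<not> (k < 3 \<and> p < 4 \<and> q < 4) \<longrightarrow> h k p q = 0))"

definition mapB :: "(nat \<Rightarrow> nat \<Rightarrow> nat \<Rightarrow> real) \<Rightarrow> tensor13" where
  "mapB h = (\<lambda>i S. \<Sum>k<3. \<Sum>p<4. \<Sum>q<4. h k p q *
      ((if p = i then wedge (fb q) (omega k) S else 0) +
       (if q = i then wedge (fb p) (omega k) S else 0)))"

end

theory Submission
  imports Defs
begin

text \<open>A (B h) = h^k_pq (f^p \<wedge> f^q + f^q \<wedge> f^p) \<wedge> \<omega>_k vanishes since the wedge product of
covectors is antisymmetric. A 4-form is determined by its single top coefficient, so the kernel
of A is cut out by one linear equation on the 16 coefficients of V* \<otimes> \<Lambda>^3 V*. Conversely,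
expressing these 16 coefficients of B h as linear forms in h, one solves for a symmetric h in
terms of any T in the kernel; the one kernel equation is exactly what makes the solution
consistent.\<close>

lemma shuffle_sign_singleton: "shuffle_sign {q} X = (-1) ^ card (X \<inter> {..<q})"
proof -
  have "{(i, j). i \<in> {q} \<and> j \<in> X \<and> j < i} = Pair q ` (X \<inter> {..<q})" by auto
  then show ?thesis unfolding shuffle_sign_def by (simp add: card_image inj_on_def)
qed

lemma wedge_fb:
  "wedge (fb q) \<beta> S =
     (if finite S \<and> q \<in> S then shuffle_sign {q} (S - {q}) * \<beta> (S - {q}) else 0)"
proof (cases "finite S")
  case True
  have "wedge (fb q) \<beta> S =
      (\<Sum>I\<in>Pow S. if I = {q} then shuffle_sign I (S - I) * \<beta> (S - I) else 0)"
    unfolding wedge_def fb_def by (intro sum.cong) auto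
  then show ?thesis using True by (simp add: sum.delta)
next
  case False
  then show ?thesis unfolding wedge_def by simp
qed

lemma wedge_fb_fb:
  "wedge (fb a) (fb b) X = (if a \<noteq> b \<and> X = {a, b} then (if b < a then -1 else 1) else 0)"
proof -
  have "(finite X \<and> a \<in> X \<and> X - {a} = {b}) \<longleftrightarrow> (a \<noteq> b \<and> X = {a, b})" by blast
  moreover have "wedge (fb a) (fb b) X =
      (if finite X \<and> a \<in> X \<and> X - {a} = {b} then shuffle_sign {a} (X - {a}) else 0)"
    by (subst wedge_fb) (simp add: fb_def)
  ultimately have "wedge (fb a) (fb b) X =
      (if a \<noteq> b \<and> X = {a, b} then shuffle_sign {a} {b} else 0)"
    by auto
  moreover have "{b} \<inter> {..<a} = (if b < a then {b} else {})" by auto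
  ultimately show ?thesis by (simp add: shuffle_sign_singleton)
qed

lemma omega_eq:
  "omega k X =
    (if k = 0 then (if X = {0,1} then 1 else 0) + (if X = {2,3} then 1 else 0)
     else if k = 1 then (if X = {0,2} then 1 else 0) - (if X = {1,3} then 1 else 0)
     else (if X = {0,3} then 1 else 0) + (if X = {1,2} then 1 else 0))"
  unfolding omega_def form_add_def wedge_fb_fb by (auto simp: insert_commute)

lemma is_form_fb: "i < 4 \<Longrightarrow> is_form 1 (fb i)"
  unfolding is_form_def fb_def by simp

lemma is_form_form_add: "is_form k \<alpha> \<Longrightarrow> is_form k \<beta> \<Longrightarrow> is_form k (form_add \<alpha> \<beta>)"
  unfolding is_form_def form_add_def by (metis add.right_neutral add_0)

lemma is_form_wedge_fb:
  assumes "is_form k \<beta>" "i < 4"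
  shows "is_form (Suc k) (wedge (fb i) \<beta>)"
  unfolding is_form_def
proof (intro allI impI)
  fix S assume "wedge (fb i) \<beta> S \<noteq> 0"
  then have S: "finite S" "i \<in> S" and "\<beta> (S - {i}) \<noteq> 0"
    by (simp_all add: wedge_fb split: if_splits)
  then have S_i: "S - {i} \<subseteq> {0..<4}" "card (S - {i}) = k"
    using assms(1) unfolding is_form_def by simp_all
  have "S \<subseteq> {0..<4}"
    using S_i(1) S(2) assms(2) by fastforce
  moreover have "card S = Suc k"
    using card_Suc_Diff1[OF S] S_i(2) by simp
  ultimately show "S \<subseteq> {0..<4} \<and> card S = Suc k" ..
qed

lemma is_form_wedge_fb_fb: "a < 4 \<Longrightarrow> b < 4 \<Longrightarrow> is_form 2 (wedge (fb a) (fb b))"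
  using is_form_wedge_fb[OF is_form_fb] by (simp add: numeral_2_eq_2)

lemma is_form_omega: "is_form 2 (omega k)"
  unfolding omega_def by (simp add: is_form_form_add is_form_wedge_fb_fb)

lemma valid_T_mapB: "valid_T (mapB h)"
  unfolding valid_T_def
proof (intro allI conjI impI)
  fix i :: nat
  show "mapB h i = (\<lambda>_. 0)" if "i \<ge> 4"
    using that unfolding mapB_def by auto
  have "mapB h i S = 0" if "\<not> (S \<subseteq> {0..<4} \<and> card S = 3)" for S
  proof -
    have "wedge (fb q) (omega k) S = 0" if "q < 4" for q k
      using is_form_wedge_fb[OF is_form_omega that] \<open>\<not> (S \<subseteq> {0..<4} \<and> card S = 3)\<close>
      unfolding is_form_def numeral_3_eq_3 numeral_2_eq_2 by blast
    then show ?thesis unfolding mapB_def by (intro sum.neutral ballI) simp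
  qed
  then show "is_form 3 (mapB h i)"
    unfolding is_form_def by blast
qed

lemma atLeastLessThan_0_4: "{0..<4::nat} = {0,1,2,3}"
  by auto

lemma card_3_subset_cases:
  assumes "S \<subseteq> {0..<4::nat}" "card S = 3"
  shows "S = {1,2,3} \<or> S = {0,2,3} \<or> S = {0,1,3} \<or> S = {0,1,2}"
proof -
  have "S \<noteq> {0..<4}" using assms(2) by auto
  then obtain m where "m \<in> {0..<4}" "m \<notin> S" using assms(1) by blast
  then have m: "m < 4" "m \<notin> S" by simp_all
  have "card ({0..<4} - {m}) = 3" using m by simp
  then have S: "S = {0,1,2,3} - {m}"
    using assms m unfolding atLeastLessThan_0_4[symmetric] by (intro card_subset_eq) auto
  have "m = 0 \<or> m = 1 \<or> m = 2 \<or> m = 3" using m by auto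
  then show ?thesis unfolding S by (elim disjE) (simp_all add: insert_Diff_if)
qed

lemma is_form_3_eqI:
  assumes "is_form 3 \<alpha>" "is_form 3 \<beta>"
    and "\<alpha> {1,2,3} = \<beta> {1,2,3}" "\<alpha> {0,2,3} = \<beta> {0,2,3}"
    and "\<alpha> {0,1,3} = \<beta> {0,1,3}" "\<alpha> {0,1,2} = \<beta> {0,1,2}"
  shows "\<alpha> = \<beta>"
proof
  fix S
  show "\<alpha> S = \<beta> S"
  proof (cases "S \<subseteq> {0..<4} \<and> card S = 3")
    case True
    then show ?thesis using card_3_subset_cases assms(3-6) by blast
  next
    case False
    then show ?thesis using assms(1,2) unfolding is_form_def by metis
  qed
qed

lemma is_form_4_eq_0_iff:
  assumes "is_form 4 \<alpha>"
  shows "\<alpha> = (\<lambda>_. 0) \<longleftrightarrow> \<alpha> {0,1,2,3} = 0"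
proof
  assume top: "\<alpha> {0,1,2,3} = 0"
  show "\<alpha> = (\<lambda>_. 0)"
  proof
    fix S
    show "\<alpha> S = 0"
    proof (rule ccontr)
      assume "\<alpha> S \<noteq> 0"
      then have "S \<subseteq> {0..<4}" "card S = 4" using assms unfolding is_form_def by blast+
      then have "S = {0..<4}" by (intro card_subset_eq) auto
      then show False using top \<open>\<alpha> S \<noteq> 0\<close> by (simp add: atLeastLessThan_0_4)
    qed
  qed
qed simp

lemma is_form_mapA:
  assumes "valid_T T"
  shows "is_form 4 (mapA T)"
proof -
  have "mapA T S = 0" if "\<not> (S \<subseteq> {0..<4} \<and> card S = 4)" for S
  proof -
    have "wedge (fb i) (T i) S = 0" if "i < 4" for i
    proof -
      have "is_form (Suc 3) (wedge (fb i) (T i))"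
        using is_form_wedge_fb[of 3 "T i" i] assms that unfolding valid_T_def by blast
      then have "is_form 4 (wedge (fb i) (T i))" by simp
      then show ?thesis
        using \<open>\<not> (S \<subseteq> {0..<4} \<and> card S = 4)\<close> unfolding is_form_def by blast
    qed
    then show ?thesis unfolding mapA_def by simp
  qed
  then show ?thesis unfolding is_form_def by blast
qed

lemma mapA_top_coefficient:
  "mapA T {0,1,2,3} = T 0 {1,2,3} - T 1 {0,2,3} + T 2 {0,1,3} - T 3 {0,1,2}"
  by (simp add: mapA_def lessThan_nat_numeral wedge_fb shuffle_sign_singleton insert_Diff_if)

lemma mapA_eq_0_iff:
  "valid_T T \<Longrightarrow>
     mapA T = (\<lambda>_. 0) \<longleftrightarrow> T 0 {1,2,3} - T 1 {0,2,3} + T 2 {0,1,3} - T 3 {0,1,2} = 0"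
  using is_form_4_eq_0_iff[OF is_form_mapA] mapA_top_coefficient by simp

lemma mapB_coefficients:
  "mapB h 0 {1,2,3} = h 0 0 1 + h 0 1 0 + h 1 0 2 + h 1 2 0 + h 2 0 3 + h 2 3 0"
  "mapB h 0 {0,2,3} = 2 * h 0 0 0 + h 1 0 3 + h 1 3 0 - h 2 0 2 - h 2 2 0"
  "mapB h 0 {0,1,3} = h 0 0 3 + h 0 3 0 - 2 * h 1 0 0 - h 2 0 1 - h 2 1 0"
  "mapB h 0 {0,1,2} = h 0 0 2 + h 0 2 0 - h 1 0 1 - h 1 1 0 + 2 * h 2 0 0"
  "mapB h 1 {1,2,3} = 2 * h 0 1 1 + h 1 1 2 + h 1 2 1 + h 2 1 3 + h 2 3 1"
  "mapB h 1 {0,2,3} = h 0 0 1 + h 0 1 0 + h 1 1 3 + h 1 3 1 - h 2 1 2 - h 2 2 1"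
  "mapB h 1 {0,1,3} = h 0 1 3 + h 0 3 1 - h 1 0 1 - h 1 1 0 - 2 * h 2 1 1"
  "mapB h 1 {0,1,2} = h 0 1 2 + h 0 2 1 - 2 * h 1 1 1 + h 2 0 1 + h 2 1 0"
  "mapB h 2 {1,2,3} = h 0 1 2 + h 0 2 1 + 2 * h 1 2 2 + h 2 2 3 + h 2 3 2"
  "mapB h 2 {0,2,3} = h 0 0 2 + h 0 2 0 + h 1 2 3 + h 1 3 2 - 2 * h 2 2 2"
  "mapB h 2 {0,1,3} = h 0 2 3 + h 0 3 2 - h 1 0 2 - h 1 2 0 - h 2 1 2 - h 2 2 1"
  "mapB h 2 {0,1,2} = 2 * h 0 2 2 - h 1 1 2 - h 1 2 1 + h 2 0 2 + h 2 2 0"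
  "mapB h 3 {1,2,3} = h 0 1 3 + h 0 3 1 + h 1 2 3 + h 1 3 2 + 2 * h 2 3 3"
  "mapB h 3 {0,2,3} = h 0 0 3 + h 0 3 0 + 2 * h 1 3 3 - h 2 2 3 - h 2 3 2"
  "mapB h 3 {0,1,3} = 2 * h 0 3 3 - h 1 0 3 - h 1 3 0 - h 2 1 3 - h 2 3 1"
  "mapB h 3 {0,1,2} = h 0 2 3 + h 0 3 2 - h 1 1 3 - h 1 3 1 + h 2 0 3 + h 2 3 0"
  by (simp_all add: mapB_def lessThan_nat_numeral omega_eq wedge_fb shuffle_sign_singleton
      insert_Diff_if doubleton_eq_iff Int_insert_left)

lemma mapA_mapB:
  assumes "valid_h h"
  shows "mapA (mapB h) = (\<lambda>_. 0)"
proof -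
  have "h k p q = h k q p" if "q < p" for k p q
    using assms unfolding valid_h_def by blast
  then show ?thesis
    unfolding mapA_eq_0_iff[OF valid_T_mapB] mapB_coefficients by simp
qed

text \<open>Obtained by solving the equations of mapB_coefficients for h, supported on 15 entries up to
symmetry (dim ker A = 15). Each entry enters those equations twice, as h^k_pq and h^k_qp,
hence the halves.\<close>
definition kernel_preimage :: "tensor13 \<Rightarrow> nat \<Rightarrow> nat \<Rightarrow> nat \<Rightarrow> real" where
  "kernel_preimage T k p q = (let a = min p q; b = max p q in
     if 3 \<le> k \<or> 4 \<le> b then 0
     else if k = 0 \<and> a = 0 \<and> b = 0 then T 0 {0,2,3} / 2
     else if k = 0 \<and> a = 0 \<and> b = 1 then T 1 {0,2,3} / 2
     else if k = 0 \<and> a = 0 \<and> b = 2 then T 2 {0,2,3} / 2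
     else if k = 0 \<and> a = 0 \<and> b = 3 then T 3 {0,2,3} / 2
     else if k = 0 \<and> a = 1 \<and> b = 1 then T 1 {1,2,3} / 2
     else if k = 0 \<and> a = 1 \<and> b = 2 then T 2 {1,2,3} / 2
     else if k = 0 \<and> a = 1 \<and> b = 3 then T 3 {1,2,3} / 2
     else if k = 0 \<and> a = 2 \<and> b = 2 then T 2 {0,1,2} / 2
     else if k = 0 \<and> a = 2 \<and> b = 3 then T 3 {0,1,2} / 2
     else if k = 0 \<and> a = 3 \<and> b = 3 then T 3 {0,1,3} / 2
     else if k = 1 \<and> a = 0 \<and> b = 0 then (T 3 {0,2,3} - T 0 {0,1,3}) / 2
     else if k = 1 \<and> a = 0 \<and> b = 1 then (T 3 {1,2,3} - T 1 {0,1,3}) / 2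
     else if k = 1 \<and> a = 0 \<and> b = 2 then (T 3 {0,1,2} - T 2 {0,1,3}) / 2
     else if k = 1 \<and> a = 1 \<and> b = 1 then (T 2 {1,2,3} - T 1 {0,1,2}) / 2
     else if k = 2 \<and> a = 0 \<and> b = 0 then
       (T 0 {0,1,2} - T 1 {0,1,3} - T 2 {0,2,3} + T 3 {1,2,3}) / 2
     else 0)"

lemma valid_h_kernel_preimage: "valid_h (kernel_preimage T)"
  unfolding valid_h_def
proof (intro allI conjI impI)
  fix k p q :: nat
  show "kernel_preimage T k p q = kernel_preimage T k q p"
    unfolding kernel_preimage_def by (simp only: min.commute[of p q] max.commute[of p q])
  show "kernel_preimage T k p q = 0" if "\<not> (k < 3 \<and> p < 4 \<and> q < 4)"
  proof -
    have "3 \<le> k \<or> 4 \<le> max p q" using that by auto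
    then show ?thesis unfolding kernel_preimage_def Let_def by (rule if_P)
  qed
qed

lemma mapB_kernel_preimage:
  assumes T: "valid_T T" "mapA T = (\<lambda>_. 0)"
  shows "mapB (kernel_preimage T) = T"
proof
  fix i
  have ker: "T 0 {1,2,3} = T 1 {0,2,3} - T 2 {0,1,3} + T 3 {0,1,2}"
    using T mapA_eq_0_iff by simp
  have forms: "is_form 3 (mapB (kernel_preimage T) j)" "is_form 3 (T j)" for j
    using T(1) valid_T_mapB unfolding valid_T_def by blast+
  show "mapB (kernel_preimage T) i = T i"
  proof (cases "i < 4")
    case True
    then consider "i = 0" | "i = 1" | "i = 2" | "i = 3" by linarith
    \<comment> \<open>One_nat_def would turn the index 1 into Suc 0, so that ker no longer matches.\<close>
    then show ?thesis
      by cases (simp only:; rule is_form_3_eqI[OF forms];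
          unfold mapB_coefficients; simp add: kernel_preimage_def ker field_simps del: One_nat_def)+
  next
    case False
    then show ?thesis
      using T(1) valid_T_mapB unfolding valid_T_def by simp
  qed
qed

theorem propositionA1:
  shows "mapB ` {h. valid_h h} = {T. valid_T T \<and> mapA T = (\<lambda>_. 0)}"
proof (intro equalityI subsetI)
  fix T assume "T \<in> mapB ` {h. valid_h h}"
  then show "T \<in> {T. valid_T T \<and> mapA T = (\<lambda>_. 0)}"
    using valid_T_mapB mapA_mapB by blast
next
  fix T assume "T \<in> {T. valid_T T \<and> mapA T = (\<lambda>_. 0)}"
  then have "T = mapB (kernel_preimage T)"
    using mapB_kernel_preimage by simp
  then show "T \<in> mapB ` {h. valid_h h}"
    using valid_h_kernel_preimage by blast
qed

end
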